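(* Let $G=(V,E)$ be a finite simple undirected graph with $N\ge1$ vertices and put $G_0=G$. Then there exists a sequence of induced subgraphs $G_0\supseteq G_1\supseteq\cdots\supseteq G_N$, where $G_N$ is the graph with no vertices and, for each $i=0,\dots,N-1$, $G_{i+1}$ is obtained from $G_i$ by deleting one vertex, such that $C(G_i)\ge C(G_{i+1})$ for all $i=0,\dots,N-1$.
   Context: For a vertex $u$ of a graph, $d_u$ is its degree and $T(u)$ the number of triangles containing $u$; the local clustering coefficient is $C(u)=\frac{2T(u)}{d_u(d_u-1)}$ if $d_u>1$ and $C(u)=0$ otherwise. The average clustering coefficient of a graph $H$ with $n\ge1$ vertices is $C(H)=\frac1n\sum_{u\in V(H)}C(u)$ (local coefficients computed in $H$); by convention the graph with no vertices has $C=0$. *)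

theory Defs
  imports Complex_Main
begin

definition simple_graph :: "'a set \<Rightarrow> ('a \<Rightarrow> 'a \<Rightarrow> bool) \<Rightarrow> bool" where
  "simple_graph V E \<longleftrightarrow> finite V \<and> (\<forall>u v. E u v \<longrightarrow> E v u) \<and> (\<forall>u. \<not> E u u)"

definition ind_degree :: "('a \<Rightarrow> 'a \<Rightarrow> bool) \<Rightarrow> 'a set \<Rightarrow> 'a \<Rightarrow> nat" where
  "ind_degree E S u = card {v \<in> S. E u v}"

definition ind_triangles :: "('a \<Rightarrow> 'a \<Rightarrow> bool) \<Rightarrow> 'a set \<Rightarrow> 'a \<Rightarrow> nat" where
  "ind_triangles E S u =
     card {{v, w} | v w. v \<in> S \<and> w \<in> S \<and> E u v \<and> E u w \<and> E v w}"

definition local_clust :: "('a \<Rightarrow> 'a \<Rightarrow> bool) \<Rightarrow> 'a set \<Rightarrow> 'a \<Rightarrow> real" where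
  "local_clust E S u =
     (if ind_degree E S u > 1
      then 2 * real (ind_triangles E S u)
             / (real (ind_degree E S u) * (real (ind_degree E S u) - 1))
      else 0)"

definition avg_clust :: "('a \<Rightarrow> 'a \<Rightarrow> bool) \<Rightarrow> 'a set \<Rightarrow> real" where
  "avg_clust E S =
     (if S = {} then 0 else (\<Sum>u\<in>S. local_clust E S u) / real (card S))"

end

theory Submission
  imports Defs
begin

text \<open>Fix a vertex u of degree d and with t triangles. Deleting a neighbour x of u lowers its
degree to d - 1 and destroys exactly the t_x triangles through the edge ux; since every
triangle at u contains two neighbours of u, the t_x sum to 2t. Hence, for d \<ge> 3, the values
C(u) in the graphs G - x, x a neighbour, sum to 2(dt - 2t)/((d-1)(d-2)) = d C(u), while
deleting a non-neighbour leaves C(u) unchanged. So the sum over all x \<noteq> u of C(u) in G - x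
is at most (n-1) C(u), and summing over u shows that C(G - x) averaged over x is at most
C(G). Some vertex deletion therefore does not increase C, and induction on n gives the
sequence.\<close>

definition ind_nbrs :: "('a \<Rightarrow> 'a \<Rightarrow> bool) \<Rightarrow> 'a set \<Rightarrow> 'a \<Rightarrow> 'a set" where
  "ind_nbrs E S u = {v \<in> S. E u v}"

definition ind_triangle_set :: "('a \<Rightarrow> 'a \<Rightarrow> bool) \<Rightarrow> 'a set \<Rightarrow> 'a \<Rightarrow> 'a set set" where
  "ind_triangle_set E S u = {{v, w} | v w. v \<in> S \<and> w \<in> S \<and> E u v \<and> E u w \<and> E v w}"

lemma ind_degree_eq_card: "ind_degree E S u = card (ind_nbrs E S u)"
  by (simp add: ind_degree_def ind_nbrs_def)

lemma ind_triangles_eq_card: "ind_triangles E S u = card (ind_triangle_set E S u)"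
  by (simp add: ind_triangles_def ind_triangle_set_def)

lemma finite_ind_nbrs: "finite S \<Longrightarrow> finite (ind_nbrs E S u)"
  by (simp add: ind_nbrs_def)

lemma ind_triangle_set_subset_Pow: "ind_triangle_set E S u \<subseteq> Pow (ind_nbrs E S u)"
  by (auto simp: ind_triangle_set_def ind_nbrs_def)

lemma finite_ind_triangle_set: "finite S \<Longrightarrow> finite (ind_triangle_set E S u)"
  by (rule finite_subset[OF ind_triangle_set_subset_Pow]) (simp add: finite_ind_nbrs)

lemma ind_nbrs_Diff: "ind_nbrs E (S - {x}) u = ind_nbrs E S u - {x}"
  by (auto simp: ind_nbrs_def)

lemma ind_triangle_set_Diff:
  "ind_triangle_set E (S - {x}) u = {p \<in> ind_triangle_set E S u. x \<notin> p}"
  unfolding ind_triangle_set_def by blast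

lemma card_ind_triangle_set_Diff:
  assumes "finite S"
  shows "real (card (ind_triangle_set E (S - {x}) u))
       = real (card (ind_triangle_set E S u)) - real (card {p \<in> ind_triangle_set E S u. x \<in> p})"
proof -
  let ?T = "ind_triangle_set E S u"
  have "ind_triangle_set E (S - {x}) u = ?T - {p \<in> ?T. x \<in> p}"
    unfolding ind_triangle_set_Diff by blast
  moreover have "finite {p \<in> ?T. x \<in> p}" and "{p \<in> ?T. x \<in> p} \<subseteq> ?T"
    using finite_ind_triangle_set[OF assms] by auto
  ultimately show ?thesis
    by (simp add: card_Diff_subset card_mono finite_ind_triangle_set[OF assms])
qed

lemma sum_card_ind_triangles_through:
  assumes "irreflp E" and "finite S"
  shows "(\<Sum>x\<in>ind_nbrs E S u. card {p \<in> ind_triangle_set E S u. x \<in> p})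
       = 2 * card (ind_triangle_set E S u)"
proof (rule sum_multicount)
  show "\<forall>p\<in>ind_triangle_set E S u. card {x \<in> ind_nbrs E S u. x \<in> p} = 2"
  proof
    fix p assume p: "p \<in> ind_triangle_set E S u"
    then obtain v w where "p = {v, w}" "E v w"
      unfolding ind_triangle_set_def by blast
    with assms(1) have "card p = 2" by (metis card_2_iff irreflpD)
    moreover have "{x \<in> ind_nbrs E S u. x \<in> p} = p"
      using p ind_triangle_set_subset_Pow[of E S u] by blast
    ultimately show "card {x \<in> ind_nbrs E S u. x \<in> p} = 2" by simp
  qed
qed (simp_all add: assms finite_ind_nbrs finite_ind_triangle_set)

lemma local_clust_nonneg: "local_clust E S u \<ge> 0"
  by (simp add: local_clust_def)

lemma local_clust_Diff_nonadjacent: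
  assumes "\<not> E u x"
  shows "local_clust E (S - {x}) u = local_clust E S u"
proof -
  have "ind_degree E (S - {x}) u = ind_degree E S u"
    and "ind_triangles E (S - {x}) u = ind_triangles E S u"
    using assms by (auto simp: ind_degree_def ind_triangles_def intro!: arg_cong[where f = card])
  then show ?thesis by (simp add: local_clust_def)
qed

lemma local_clust_Diff_neighbour:
  assumes "finite S" and "x \<in> ind_nbrs E S u" and "ind_degree E S u \<ge> 3"
  defines "d \<equiv> real (ind_degree E S u)"
  shows "local_clust E (S - {x}) u
       = 2 * (real (ind_triangles E S u) - real (card {p \<in> ind_triangle_set E S u. x \<in> p}))
           / ((d - 1) * (d - 2))"
proof -
  have "ind_degree E (S - {x}) u = ind_degree E S u - 1"
    using assms(2) by (simp add: ind_degree_eq_card ind_nbrs_Diff finite_ind_nbrs[OF assms(1)])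
  then have deg: "real (ind_degree E (S - {x}) u) = d - 1" and "ind_degree E (S - {x}) u > 1"
    using assms(3) by (simp_all add: d_def)
  then have "local_clust E (S - {x}) u = 2 * real (ind_triangles E (S - {x}) u) / ((d - 1) * (d - 1 - 1))"
    unfolding local_clust_def deg by simp
  also have "d - 1 - 1 = d - 2" by simp
  finally show ?thesis
    by (simp add: ind_triangles_eq_card card_ind_triangle_set_Diff[OF assms(1)])
qed

lemma sum_local_clust_Diff_neighbours_le:
  assumes "irreflp E" and "finite S"
  shows "(\<Sum>x\<in>ind_nbrs E S u. local_clust E (S - {x}) u)
       \<le> real (ind_degree E S u) * local_clust E S u"
proof (cases "ind_degree E S u \<ge> 3")
  case False
  have "local_clust E (S - {x}) u = 0" if "x \<in> ind_nbrs E S u" for x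
    using that False
    by (simp add: local_clust_def ind_degree_eq_card ind_nbrs_Diff finite_ind_nbrs[OF assms(2)])
  then show ?thesis by (simp add: local_clust_nonneg)
next
  case True
  define d where "d = real (ind_degree E S u)"
  define t where "t = real (ind_triangles E S u)"
  have d3: "d \<ge> 3" using True by (simp add: d_def)
  have "(\<Sum>x\<in>ind_nbrs E S u. local_clust E (S - {x}) u)
      = (\<Sum>x\<in>ind_nbrs E S u. 2 * (t - real (card {p \<in> ind_triangle_set E S u. x \<in> p})))
          / ((d - 1) * (d - 2))"
    by (simp add: local_clust_Diff_neighbour[OF assms(2) _ True] sum_divide_distrib d_def t_def)
  also have "\<dots> = 2 * (d * t - 2 * t) / ((d - 1) * (d - 2))"
    by (simp add: sum_distrib_left[symmetric] sum_subtractf of_nat_sum[symmetric]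
        sum_card_ind_triangles_through[OF assms] ind_degree_eq_card ind_triangles_eq_card d_def t_def)
  also have "\<dots> = 2 * (t * (d - 2)) / ((d - 1) * (d - 2))"
    by (simp add: algebra_simps)
  also have "\<dots> = d * (2 * t / (d * (d - 1)))"
    using d3 by simp
  also have "\<dots> = real (ind_degree E S u) * local_clust E S u"
    using True by (simp add: local_clust_def d_def t_def)
  finally show ?thesis by simp
qed

lemma sum_local_clust_Diff_le:
  assumes "irreflp E" and "finite S" and "u \<in> S"
  shows "(\<Sum>x\<in>S - {u}. local_clust E (S - {x}) u) \<le> (real (card S) - 1) * local_clust E S u"
proof -
  let ?N = "ind_nbrs E S u" and ?C = "local_clust E S u"
  have N: "?N \<subseteq> S - {u}" using assms(1) by (auto simp: ind_nbrs_def dest: irreflpD)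
  have "(\<Sum>x\<in>S - {u}. local_clust E (S - {x}) u)
      = (\<Sum>x\<in>?N. local_clust E (S - {x}) u) + (\<Sum>x\<in>S - {u} - ?N. local_clust E (S - {x}) u)"
    using sum.subset_diff[OF N] assms(2) by (simp add: add.commute)
  also have "(\<Sum>x\<in>S - {u} - ?N. local_clust E (S - {x}) u) = (\<Sum>x\<in>S - {u} - ?N. ?C)"
    by (rule sum.cong) (auto simp: ind_nbrs_def local_clust_Diff_nonadjacent)
  also have "(\<Sum>x\<in>?N. local_clust E (S - {x}) u) \<le> real (card ?N) * ?C"
    using sum_local_clust_Diff_neighbours_le[OF assms(1,2)] by (simp add: ind_degree_eq_card)
  also have "real (card ?N) * ?C + (\<Sum>x\<in>S - {u} - ?N. ?C) = (real (card S) - 1) * ?C"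
  proof -
    have "card ?N \<le> card (S - {u})" by (rule card_mono) (use N assms(2) in auto)
    then have "card ?N + card (S - {u} - ?N) = card S - 1"
      using N assms(2,3) by (simp add: card_Diff_subset finite_subset)
    moreover have "card S \<ge> 1" using assms(2,3) by (auto simp: Suc_le_eq card_gt_0_iff)
    ultimately have "real (card ?N) + real (card (S - {u} - ?N)) = real (card S) - 1"
      by (metis of_nat_1 of_nat_add of_nat_diff)
    then show ?thesis by (simp only: sum_constant distrib_right[symmetric])
  qed
  finally show ?thesis by simp
qed

lemma sum_avg_clust_Diff_le:
  assumes "irreflp E" and "finite S"
  shows "(\<Sum>x\<in>S. avg_clust E (S - {x})) \<le> real (card S) * avg_clust E S"
proof (cases "S = {}")
  case False
  define n where "n = real (card S)"
  define T where "T = (\<Sum>u\<in>S. local_clust E S u)"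
  have n1: "n \<ge> 1" using False assms(2) by (simp add: n_def Suc_leI card_gt_0_iff)
  have avg_Diff: "avg_clust E (S - {x}) = (\<Sum>u\<in>S - {x}. local_clust E (S - {x}) u) / (n - 1)"
    if "x \<in> S" for x
  proof -
    have "real (card (S - {x})) = n - 1"
      using that assms(2) n1 by (simp add: n_def)
    then show ?thesis by (cases "S - {x} = {}") (simp_all add: avg_clust_def)
  qed
  have "(\<Sum>x\<in>S. avg_clust E (S - {x})) = (\<Sum>x\<in>S. \<Sum>u\<in>S - {x}. local_clust E (S - {x}) u) / (n - 1)"
    by (simp add: avg_Diff sum_divide_distrib)
  also have "(\<Sum>x\<in>S. \<Sum>u\<in>S - {x}. local_clust E (S - {x}) u)
           = (\<Sum>u\<in>S. \<Sum>x\<in>S - {u}. local_clust E (S - {x}) u)"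
    using sum.swap_restrict[OF assms(2) assms(2), of "\<lambda>x u. local_clust E (S - {x}) u" "\<lambda>x u. x \<noteq> u"]
    by (simp add: set_diff_eq eq_commute)
  also have "\<dots> \<le> (n - 1) * T"
    unfolding T_def sum_distrib_left
    by (rule sum_mono) (simp add: sum_local_clust_Diff_le[OF assms] n_def)
  also have "(n - 1) * T / (n - 1) \<le> T"
    using n1 by (cases "n = 1") (simp_all add: T_def sum_nonneg local_clust_nonneg)
  also have "T = n * avg_clust E S"
    using False n1 by (simp add: avg_clust_def T_def n_def)
  finally show ?thesis
    using n1 by (simp add: divide_right_mono n_def)
qed simp

lemma exists_avg_clust_Diff_le:
  assumes "irreflp E" and "finite S" and "S \<noteq> {}"
  shows "\<exists>x\<in>S. avg_clust E (S - {x}) \<le> avg_clust E S"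
proof (rule ccontr)
  assume "\<not> ?thesis"
  then have "(\<Sum>x\<in>S. avg_clust E S) < (\<Sum>x\<in>S. avg_clust E (S - {x}))"
    using assms(2,3) by (intro sum_strict_mono) auto
  then show False
    using sum_avg_clust_Diff_le[OF assms(1,2)] by simp
qed

lemma exists_deletion_sequence:
  fixes f :: "'a set \<Rightarrow> 'b :: ord"
  assumes step: "\<And>S. finite S \<Longrightarrow> S \<noteq> {} \<Longrightarrow> \<exists>x\<in>S. f (S - {x}) \<le> f S"
  shows "finite S \<Longrightarrow> card S = n \<Longrightarrow> \<exists>G :: nat \<Rightarrow> 'a set.
           G 0 = S \<and> G n = {} \<and>
           (\<forall>i<n. \<exists>x\<in>G i. G (Suc i) = G i - {x}) \<and>
           (\<forall>i<n. f (G (Suc i)) \<le> f (G i))"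
proof (induction n arbitrary: S)
  case 0
  then show ?case by (intro exI[of _ "\<lambda>_. {}"]) simp
next
  case (Suc n)
  then obtain x where x: "x \<in> S" "f (S - {x}) \<le> f S"
    using step[of S] by force
  moreover have "finite (S - {x})" and "card (S - {x}) = n"
    using Suc.prems x(1) by simp_all
  ultimately obtain G where "G 0 = S - {x}" "G n = {}"
    "\<forall>i<n. \<exists>y\<in>G i. G (Suc i) = G i - {y}" "\<forall>i<n. f (G (Suc i)) \<le> f (G i)"
    using Suc.IH[of "S - {x}"] by blast
  with x show ?case
    by (intro exI[of _ "case_nat S G"]) (auto simp: All_less_Suc2)
qed

theorem mainTheorem8:
  fixes V :: "'a set" and E :: "'a \<Rightarrow> 'a \<Rightarrow> bool" and N :: nat
  assumes "simple_graph V E"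
    and "card V = N" and "N \<ge> 1"
  shows "\<exists>G :: nat \<Rightarrow> 'a set.
           G 0 = V \<and> G N = {} \<and>
           (\<forall>i<N. \<exists>x\<in>G i. G (Suc i) = G i - {x}) \<and>
           (\<forall>i<N. avg_clust E (G i) \<ge> avg_clust E (G (Suc i)))"
proof -
  have "finite V" and "irreflp E"
    using assms(1) by (simp_all add: simple_graph_def irreflp_def)
  then show ?thesis
    using exists_deletion_sequence[of "avg_clust E", OF exists_avg_clust_Diff_le, of V N] assms(2)
    by simp
qed

end
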